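(* Let $f_1,f_2$ be strongly hyperbolic functions, $a_1,a_2>0$, $b_1,b_2,c_1,c_2\in\mathbb{R}$, and let $D_1=\overline{f_{a_1,b_1,c_1}}$, $D_2=\overline{f_{a_2,b_2,c_2}}$ be distinct with $D_1\cap D_2=\{p\}$. (1) If $p=(b,\infty)$ with $b\in\mathbb{R}$, then $a_1=a_2$, $b_1=b_2=-b$ and $c_1\neq c_2$. (2) If $p=(\infty,c)$ with $c\in\mathbb{R}$, then $a_1=a_2$, $b_1\neq b_2$ and $c_1=c_2=c$. (3) If $p=(x_p,y_p)\in\mathbb{R}^2$, then $f'_{a_1,b_1,c_1}(x_p)=f'_{a_2,b_2,c_2}(x_p)$.
   Context: Identify $\mathbb{S}^1$ with $\mathbb{R}\cup\{\infty\}$, $\mathcal{P}=\mathbb{S}^1\times\mathbb{S}^1$, $\mathbb{R}^+=(0,\infty)$. A function $f:\mathbb{R}^+\to\mathbb{R}^+$ is strongly hyperbolic if: (1) $\lim_{x\to0+}f(x)=+\infty$, $\lim_{x\to+\infty}f(x)=0$; (2) $f$ strictly convex; (3) $\lim_{x\to+\infty}f(x+b)/f(x)=1$ for each $b\in\mathbb{R}$; (4) $f$ differentiable; (5) $\ln|f'|$ strictly convex. For $a>0$, $b,c\in\mathbb{R}$: $f_{a,b,c}:\mathbb{R}\setminus\{-b\}\to\mathbb{R}$, $f_{a,b,c}(x)=af_1(x+b)+c$ for $x>-b$, $f_{a,b,c}(x)=-af_2(-x-b)+c$ for $x<-b$; $\overline{f_{a,b,c}}=\{(x,f_{a,b,c}(x)):x\ne-b\}\cup\{(-b,\infty),(\infty,c)\}\subset\mathcal{P}$.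 *)

theory Defs
  imports "HOL-Analysis.Analysis"
begin

text \<open>The circle S^1 identified with the real line plus one point at infinity.\<close>
datatype circ = Fin real | Infty

definition strictly_convex_on :: "real set \<Rightarrow> (real \<Rightarrow> real) \<Rightarrow> bool" where
  "strictly_convex_on S f \<longleftrightarrow> convex S \<and>
     (\<forall>x\<in>S. \<forall>y\<in>S. \<forall>t. x \<noteq> y \<and> 0 < t \<and> t < 1 \<longrightarrow>
        f ((1 - t) * x + t * y) < (1 - t) * f x + t * f y)"

definition strongly_hyperbolic :: "(real \<Rightarrow> real) \<Rightarrow> bool" where
  "strongly_hyperbolic f \<longleftrightarrow>
     (\<forall>x>0. f x > 0) \<and>
     filterlim f at_top (at_right 0) \<and>
     (f \<longlongrightarrow> 0) at_top \<and>
     strictly_convex_on {0<..} f \<and>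
     (\<forall>b. ((\<lambda>x. f (x + b) / f x) \<longlongrightarrow> 1) at_top) \<and>
     (\<forall>x>0. f differentiable (at x)) \<and>
     strictly_convex_on {0<..} (\<lambda>x. ln \<bar>deriv f x\<bar>)"

text \<open>The function f_{a,b,c} built from f1 and f2; its value at the excluded point -b
  is irrelevant (set to c).\<close>
definition fabc :: "(real \<Rightarrow> real) \<Rightarrow> (real \<Rightarrow> real) \<Rightarrow> real \<Rightarrow> real \<Rightarrow> real \<Rightarrow> real \<Rightarrow> real" where
  "fabc f1 f2 a b c x =
     (if x > -b then a * f1 (x + b) + c
      else if x < -b then - a * f2 (- x - b) + c
      else c)"

definition fabc_bar :: "(real \<Rightarrow> real) \<Rightarrow> (real \<Rightarrow> real) \<Rightarrow> real \<Rightarrow> real \<Rightarrow> real \<Rightarrow> (circ \<times> circ) set" where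
  "fabc_bar f1 f2 a b c =
     {(Fin x, Fin (fabc f1 f2 a b c x)) | x. x \<noteq> -b} \<union> {(Fin (-b), Infty), (Infty, Fin c)}"

end

theory Submission
  imports Defs
begin

text \<open>
  Write g_i for f_{a_i,b_i,c_i}. Off its pole -b_i, g_i is differentiable; it tends to +\<infinity>
  just right of the pole, to -\<infinity> just left of it, and to c_i at both ends of the line, and
  by condition (3) a larger factor a wins at \<plusminus>\<infinity> even after a shift. So g_1 - g_2 has a
  definite sign at both ends of each interval between consecutive poles, and by the intermediate
  value theorem it has a zero, i.e. the closures have a further common point, in every such
  interval whose ends carry opposite signs. This rules out a_1 \<noteq> a_2 in (1) and (2). In (3)
  the ends of the interval containing x_p carry the same sign, so a difference vanishing only at
  x_p does not change sign there and its derivative vanishes.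
\<close>

lemma connected_zero_free_same_sign:
  fixes f :: "'a::topological_space \<Rightarrow> real"
  assumes "connected S" "continuous_on S f" "0 \<notin> f ` S" "x \<in> S" "y \<in> S"
  shows "0 < f x * f y"
proof (rule ccontr)
  assume "\<not> 0 < f x * f y"
  moreover have "f x \<noteq> 0" "f y \<noteq> 0" using assms(3-5) by force+
  ultimately have "f x < 0 \<and> 0 < f y \<or> f y < 0 \<and> 0 < f x"
    by (auto simp: zero_less_mult_iff)
  moreover have "connected (f ` S)" using assms(1,2) by (rule connected_continuous_image[rotated])
  ultimately have "0 \<in> f ` S"
    using assms(4,5) unfolding connected_iff_interval by (auto intro: less_imp_le)
  with assms(3) show False ..
qed

lemma connected_IVT_eventually:
  fixes f :: "'a::topological_space \<Rightarrow> real"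
  assumes "connected S" "continuous_on S f" "F \<noteq> bot" "G \<noteq> bot"
    and "\<forall>\<^sub>F x in F. x \<in> S \<and> f x < 0" "\<forall>\<^sub>F x in G. x \<in> S \<and> 0 < f x"
  shows "\<exists>z\<in>S. f z = 0"
proof (rule ccontr)
  assume "\<not> (\<exists>z\<in>S. f z = 0)"
  then have "0 \<notin> f ` S" by auto
  moreover obtain x y where "x \<in> S" "f x < 0" "y \<in> S" "0 < f y"
    using eventually_happens'[OF assms(3,5)] eventually_happens'[OF assms(4,6)] by blast
  ultimately have "0 < f x * f y" "f x * f y < 0"
    using connected_zero_free_same_sign[OF assms(1,2)] by (auto simp: mult_neg_pos)
  then show False by linarith
qed

lemma DERIV_zero_at_sole_root_without_sign_change:
  fixes f :: "real \<Rightarrow> real"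
  assumes "connected S" "continuous_on S f" "{y \<in> S. f y = 0} = {x}"
    and "(f has_real_derivative D) (at x)" "F \<noteq> bot" "G \<noteq> bot"
    and "\<forall>\<^sub>F y in F. y \<in> S \<and> y < x \<and> f y < 0" "\<forall>\<^sub>F y in G. y \<in> S \<and> x < y \<and> f y < 0"
  shows "D = 0"
proof -
  obtain A B where A: "A \<in> S" "A < x" "f A < 0" and B: "B \<in> S" "x < B" "f B < 0"
    using eventually_happens'[OF assms(5,7)] eventually_happens'[OF assms(6,8)] by blast
  have "is_interval S" using assms(1) by (simp add: is_interval_connected_1)
  then have "connected (S \<inter> {..<x})" "connected (S \<inter> {x<..})"
    by (simp_all add: is_interval_connected_1[symmetric] is_interval_Int)
  moreover have same_sign: "0 < f z * f y"
    if "y \<in> T" "z \<in> T" "T \<subseteq> S" "x \<notin> T" "connected T" for y z T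
  proof -
    have "continuous_on T f" "0 \<notin> f ` T"
      using that(3,4) assms(2,3) by (auto intro: continuous_on_subset)
    then show ?thesis using connected_zero_free_same_sign that(1,2,5) by blast
  qed
  ultimately have negative: "f y < 0" if "y \<in> S" "y \<noteq> x" for y
    using same_sign[of y "S \<inter> {..<x}" A] same_sign[of y "S \<inter> {x<..}" B] that A B
    by (cases "y < x") (auto simp: zero_less_mult_iff)
  have "f y \<le> f x" if "\<bar>x - y\<bar> < min (x - A) (B - x)" for y
  proof -
    have "A \<le> y" "y \<le> B" using that by linarith+
    then have "y \<in> S" using assms(1) A(1) B(1) unfolding connected_iff_interval by blast
    moreover have "f x = 0" using assms(3) by blast
    ultimately show ?thesis using negative[of y] by (cases "y = x") auto
  qed
  then show ?thesis using DERIV_local_max[OF assms(4), of "min (x - A) (B - x)"] A B by auto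
qed

lemma eventually_at_left_less: "\<forall>\<^sub>F x in at_left (a::real). x < a"
  by (rule eventually_mono[OF eventually_at_left_real[of "a - 1"]]) auto

lemma eventually_less_if_filterlim_at_top:
  fixes f g :: "'a \<Rightarrow> real"
  assumes "(g \<longlongrightarrow> L) F" "filterlim f at_top F"
  shows "\<forall>\<^sub>F x in F. g x < f x"
proof -
  have "\<forall>\<^sub>F x in F. g x < L + 1" using order_tendstoD(2)[OF assms(1)] by simp
  moreover have "\<forall>\<^sub>F x in F. L + 1 < f x" using assms(2) unfolding filterlim_at_top_dense by blast
  ultimately show ?thesis by eventually_elim simp
qed

lemma eventually_less_if_filterlim_at_bot:
  fixes f g :: "'a \<Rightarrow> real"
  assumes "(g \<longlongrightarrow> L) F" "filterlim f at_bot F"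
  shows "\<forall>\<^sub>F x in F. f x < g x"
proof -
  have "\<forall>\<^sub>F x in F. L - 1 < g x" using order_tendstoD(1)[OF assms(1)] by simp
  moreover have "\<forall>\<^sub>F x in F. f x < L - 1" using assms(2) unfolding filterlim_at_bot_dense by blast
  ultimately show ?thesis by eventually_elim simp
qed

lemma filterlim_add_const_at_top: "filterlim (\<lambda>x. x + b) at_top (at_top :: real filter)"
  using filterlim_tendsto_add_at_top[OF tendsto_const filterlim_ident, of b]
  by (simp add: add.commute)

lemma eventually_scaled_shift_less:
  assumes "strongly_hyperbolic f" "0 < a2" "a2 < a1"
  shows "\<forall>\<^sub>F x in at_top. a2 * f (x + b2) < a1 * f (x + b1)"
proof -
  have "((\<lambda>y. f (y + (b1 - b2)) / f y) \<longlongrightarrow> 1) at_top"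
    using assms(1) unfolding strongly_hyperbolic_def by blast
  from filterlim_compose[OF this filterlim_add_const_at_top[of b2]]
  have "((\<lambda>x. f (x + b1) / f (x + b2)) \<longlongrightarrow> 1) at_top"
    by (simp add: algebra_simps)
  then have "\<forall>\<^sub>F x in at_top. a2 / a1 < f (x + b1) / f (x + b2)"
    using assms(2,3) by (intro order_tendstoD(1)) auto
  moreover have "\<forall>\<^sub>F x in at_top. 0 < f (x + b2)"
    using eventually_gt_at_top[of "- b2"]
    by eventually_elim (use assms(1) in \<open>simp add: strongly_hyperbolic_def\<close>)
  ultimately show ?thesis
    by eventually_elim (use assms(2,3) in \<open>simp add: field_simps\<close>)
qed

lemma fabc_diff_same_pole:
  "fabc f1 f2 a b c x - fabc f1 f2 a' b c' x = fabc f1 f2 (a - a') b (c - c') x"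
  by (simp add: fabc_def algebra_simps)

lemma Fin_Fin_mem_fabc_bar:
  "(Fin x, Fin y) \<in> fabc_bar f1 f2 a b c \<longleftrightarrow> x \<noteq> - b \<and> y = fabc f1 f2 a b c x"
  by (auto simp: fabc_bar_def)

lemma Fin_Infty_mem_fabc_bar: "(Fin x, Infty) \<in> fabc_bar f1 f2 a b c \<longleftrightarrow> x = - b"
  by (auto simp: fabc_bar_def)

lemma Infty_Fin_mem_fabc_bar: "(Infty, Fin y) \<in> fabc_bar f1 f2 a b c \<longleftrightarrow> y = c"
  by (auto simp: fabc_bar_def)

context
  fixes f1 f2 :: "real \<Rightarrow> real"
  assumes sh1: "strongly_hyperbolic f1" and sh2: "strongly_hyperbolic f2"
begin

lemma fabc_differentiable:
  assumes "x \<noteq> - b"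
  shows "fabc f1 f2 a b c differentiable (at x)"
proof (cases "- b < x")
  case True
  then have "f1 differentiable (at (x + b))"
    using sh1 by (simp add: strongly_hyperbolic_def)
  then obtain D where "(f1 has_real_derivative D) (at (x + b))"
    by (auto simp: real_differentiable_def)
  then have "((\<lambda>y. a * f1 (y + b) + c) has_real_derivative a * D) (at x)"
    by (auto intro!: derivative_eq_intros simp flip: DERIV_shift)
  moreover have "\<forall>\<^sub>F y in nhds x. fabc f1 f2 a b c y = a * f1 (y + b) + c"
    using eventually_nhds_in_open[of "{- b<..}" x] True
    by (auto elim!: eventually_mono simp: fabc_def)
  ultimately have "(fabc f1 f2 a b c has_real_derivative a * D) (at x)"
    by (subst DERIV_cong_ev[OF refl _ refl])
  then show ?thesis by (auto simp: real_differentiable_def)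
next
  case False
  with assms have "x < - b" by simp
  then have "f2 differentiable (at (- x - b))"
    using sh2 by (simp add: strongly_hyperbolic_def)
  then obtain D where "(f2 has_real_derivative D) (at (- x - b))"
    by (auto simp: real_differentiable_def)
  moreover have "((\<lambda>y. - y - b) has_real_derivative - 1) (at x)"
    by (auto intro!: derivative_eq_intros)
  ultimately have "((\<lambda>y. f2 (- y - b)) has_real_derivative D * - 1) (at x)"
    by (rule DERIV_chain2)
  then have "((\<lambda>y. - a * f2 (- y - b) + c) has_real_derivative - a * (D * - 1)) (at x)"
    by (intro DERIV_add[OF DERIV_cmult DERIV_const, simplified])
  moreover have "\<forall>\<^sub>F y in nhds x. fabc f1 f2 a b c y = - a * f2 (- y - b) + c"
    using eventually_nhds_in_open[of "{..< - b}" x] \<open>x < - b\<close>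
    by (auto elim!: eventually_mono simp: fabc_def)
  ultimately have "(fabc f1 f2 a b c has_real_derivative - a * (D * - 1)) (at x)"
    by (subst DERIV_cong_ev[OF refl _ refl])
  then show ?thesis by (auto simp: real_differentiable_def)
qed

lemma isCont_fabc: "x \<noteq> - b \<Longrightarrow> isCont (fabc f1 f2 a b c) x"
  by (intro differentiable_imp_continuous_within fabc_differentiable)

lemma continuous_on_fabc: "- b \<notin> S \<Longrightarrow> continuous_on S (fabc f1 f2 a b c)"
  by (intro continuous_at_imp_continuous_on ballI isCont_fabc) auto

lemma filterlim_fabc_at_right_pole:
  assumes "0 < a"
  shows "filterlim (fabc f1 f2 a b c) at_top (at_right (- b))"
proof -
  have "filterlim f1 at_top (at_right 0)" using sh1 by (simp add: strongly_hyperbolic_def)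
  then have "filterlim (\<lambda>x. c + a * f1 x) at_top (at_right 0)"
    by (intro filterlim_tendsto_add_at_top[OF tendsto_const]
        filterlim_tendsto_pos_mult_at_top[OF tendsto_const assms])
  moreover have "\<forall>\<^sub>F x in at_right 0. c + a * f1 x = fabc f1 f2 a b c (x + - b)"
    using eventually_at_right_less[of 0] by eventually_elim (simp add: fabc_def)
  ultimately show ?thesis
    unfolding filterlim_at_right_to_0[of _ _ "- b"] by (simp add: filterlim_cong)
qed

lemma filterlim_fabc_at_left_pole:
  assumes "0 < a"
  shows "filterlim (fabc f1 f2 a b c) at_bot (at_left (- b))"
proof -
  have "filterlim f2 at_top (at_right 0)" using sh2 by (simp add: strongly_hyperbolic_def)
  then have "filterlim (\<lambda>x. - c + a * f2 x) at_top (at_right 0)"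
    by (intro filterlim_tendsto_add_at_top[OF tendsto_const]
        filterlim_tendsto_pos_mult_at_top[OF tendsto_const assms])
  then have "filterlim (\<lambda>x. c - a * f2 x) at_bot (at_right 0)"
    by (simp add: filterlim_uminus_at_bot)
  moreover have "\<forall>\<^sub>F x in at_right 0. c - a * f2 x = fabc f1 f2 a b c (- (x + b))"
    using eventually_at_right_less[of 0] by eventually_elim (simp add: fabc_def)
  ultimately show ?thesis
    unfolding filterlim_at_left_to_right minus_minus filterlim_at_right_to_0[of _ _ b]
    by (simp add: filterlim_cong)
qed

lemma fabc_tendsto_at_top: "(fabc f1 f2 a b c \<longlongrightarrow> c) at_top"
proof -
  have "(f1 \<longlongrightarrow> 0) at_top" using sh1 by (simp add: strongly_hyperbolic_def)
  then have "((\<lambda>x. a * f1 (x + b) + c) \<longlongrightarrow> a * 0 + c) at_top"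
    by (intro tendsto_intros filterlim_compose[OF _ filterlim_add_const_at_top])
  moreover have "\<forall>\<^sub>F x in at_top. a * f1 (x + b) + c = fabc f1 f2 a b c x"
    using eventually_gt_at_top[of "- b"] by eventually_elim (simp add: fabc_def)
  ultimately show ?thesis by (simp add: tendsto_cong)
qed

lemma fabc_tendsto_at_bot: "(fabc f1 f2 a b c \<longlongrightarrow> c) at_bot"
proof -
  have "(f2 \<longlongrightarrow> 0) at_top" using sh2 by (simp add: strongly_hyperbolic_def)
  then have "((\<lambda>x. - a * f2 (x + - b) + c) \<longlongrightarrow> - a * 0 + c) at_top"
    by (intro tendsto_intros filterlim_compose[OF _ filterlim_add_const_at_top])
  moreover have "\<forall>\<^sub>F x in at_top. - a * f2 (x + - b) + c = fabc f1 f2 a b c (- x)"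
    using eventually_gt_at_top[of "b"] by eventually_elim (simp add: fabc_def)
  ultimately show ?thesis unfolding filterlim_at_bot_mirror by (simp add: tendsto_cong)
qed

lemma eventually_fabc_above_at_right_pole:
  assumes "0 < a" "b' \<noteq> b"
  shows "\<forall>\<^sub>F x in at_right (- b). fabc f1 f2 a' b' c' x < fabc f1 f2 a b c x"
proof -
  have "(fabc f1 f2 a' b' c' \<longlongrightarrow> fabc f1 f2 a' b' c' (- b)) (at_right (- b))"
    using isCont_fabc[of "- b" b'] assms(2) unfolding isCont_def
    by (auto intro: tendsto_within_subset)
  then show ?thesis
    by (rule eventually_less_if_filterlim_at_top[OF _ filterlim_fabc_at_right_pole[OF assms(1)]])
qed

lemma eventually_fabc_below_at_left_pole:
  assumes "0 < a" "b' \<noteq> b"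
  shows "\<forall>\<^sub>F x in at_left (- b). fabc f1 f2 a b c x < fabc f1 f2 a' b' c' x"
proof -
  have "(fabc f1 f2 a' b' c' \<longlongrightarrow> fabc f1 f2 a' b' c' (- b)) (at_left (- b))"
    using isCont_fabc[of "- b" b'] assms(2) unfolding isCont_def
    by (auto intro: tendsto_within_subset)
  then show ?thesis
    by (rule eventually_less_if_filterlim_at_bot[OF _ filterlim_fabc_at_left_pole[OF assms(1)]])
qed

lemma fabc_order_near_poles:
  assumes "0 < a" "0 < a'" "b' < b"
  shows "\<forall>\<^sub>F x in at_left (- b). fabc f1 f2 a b c x < fabc f1 f2 a' b' c' x"
    and "\<forall>\<^sub>F x in at_right (- b). fabc f1 f2 a' b' c' x < fabc f1 f2 a b c x"
    and "\<forall>\<^sub>F x in at_left (- b'). fabc f1 f2 a' b' c' x < fabc f1 f2 a b c x"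
    and "\<forall>\<^sub>F x in at_right (- b'). fabc f1 f2 a b c x < fabc f1 f2 a' b' c' x"
  using assms
  by (simp_all add: eventually_fabc_below_at_left_pole eventually_fabc_above_at_right_pole)

lemma fabc_has_root:
  assumes "0 < a" "c \<noteq> 0"
  shows "\<exists>x. x \<noteq> - b \<and> fabc f1 f2 a b c x = 0"
proof (cases "c < 0")
  case True
  have "\<forall>\<^sub>F x in at_top. x \<in> {- b<..} \<and> fabc f1 f2 a b c x < 0"
    using eventually_gt_at_top[of "- b"] order_tendstoD(2)[OF fabc_tendsto_at_top True]
    by eventually_elim auto
  moreover have "\<forall>\<^sub>F x in at_right (- b). x \<in> {- b<..} \<and> 0 < fabc f1 f2 a b c x"
    using eventually_at_right_less[of "- b"]
      filterlim_fabc_at_right_pole[OF assms(1), of b c, unfolded filterlim_at_top_dense,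
        rule_format, of 0]
    by eventually_elim auto
  ultimately have "\<exists>x\<in>{- b<..}. fabc f1 f2 a b c x = 0"
    by (intro connected_IVT_eventually continuous_on_fabc) auto
  then show ?thesis by force
next
  case False
  with assms(2) have "0 < c" by simp
  have "\<forall>\<^sub>F x in at_left (- b). x \<in> {..< - b} \<and> fabc f1 f2 a b c x < 0"
    using eventually_at_left_less[of "- b"]
      filterlim_fabc_at_left_pole[OF assms(1), of b c, unfolded filterlim_at_bot_dense,
        rule_format, of 0]
    by eventually_elim auto
  moreover have "\<forall>\<^sub>F x in at_bot. x \<in> {..< - b} \<and> 0 < fabc f1 f2 a b c x"
    using eventually_gt_at_bot[of "- b"] order_tendstoD(1)[OF fabc_tendsto_at_bot \<open>0 < c\<close>]
    by eventually_elim auto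
  ultimately have "\<exists>x\<in>{..< - b}. fabc f1 f2 a b c x = 0"
    by (intro connected_IVT_eventually continuous_on_fabc) auto
  then show ?thesis by force
qed

lemma fabc_same_pole_crossing:
  assumes "a1 \<noteq> a2" "c1 \<noteq> c2"
  shows "\<exists>x. x \<noteq> - b \<and> fabc f1 f2 a1 b c1 x = fabc f1 f2 a2 b c2 x"
proof (cases "a2 < a1")
  case True
  then obtain x where "x \<noteq> - b" "fabc f1 f2 (a1 - a2) b (c1 - c2) x = 0"
    using fabc_has_root[of "a1 - a2" "c1 - c2"] assms(2) by auto
  then show ?thesis by (metis fabc_diff_same_pole eq_iff_diff_eq_0)
next
  case False
  with assms(1) have "a1 < a2" by simp
  then obtain x where "x \<noteq> - b" "fabc f1 f2 (a2 - a1) b (c2 - c1) x = 0"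
    using fabc_has_root[of "a2 - a1" "c2 - c1"] assms(2) by auto
  then show ?thesis by (metis fabc_diff_same_pole eq_iff_diff_eq_0)
qed

lemma fabc_same_asymptote_crossing:
  assumes "0 < a2" "a2 < a1" "b1 \<noteq> b2"
  shows "\<exists>x. x \<noteq> - b1 \<and> x \<noteq> - b2 \<and> fabc f1 f2 a1 b1 c x = fabc f1 f2 a2 b2 c x"
proof (cases "b2 < b1")
  case True
  have "\<forall>\<^sub>F x in at_right (- b2). x \<in> {- b2<..} \<and> fabc f1 f2 a1 b1 c x - fabc f1 f2 a2 b2 c x < 0"
    using eventually_at_right_less[of "- b2"]
      eventually_fabc_above_at_right_pole[OF assms(1,3), where a' = a1 and c' = c and c = c]
    by eventually_elim auto
  moreover have "\<forall>\<^sub>F x in at_top. x \<in> {- b2<..} \<and> 0 < fabc f1 f2 a1 b1 c x - fabc f1 f2 a2 b2 c x"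
    using eventually_gt_at_top[of "- b2"] eventually_scaled_shift_less[OF sh1 assms(1,2), of b2 b1]
    by eventually_elim (use True in \<open>auto simp: fabc_def\<close>)
  ultimately have "\<exists>x\<in>{- b2<..}. fabc f1 f2 a1 b1 c x - fabc f1 f2 a2 b2 c x = 0"
    by (intro connected_IVT_eventually continuous_on_diff continuous_on_fabc) (use True in auto)
  then show ?thesis using True by force
next
  case False
  with assms(3) have "b1 < b2" by simp
  have "\<forall>\<^sub>F x in at_top. a2 * f2 (x + - b2) < a1 * f2 (x + - b1)"
    using eventually_scaled_shift_less[OF sh2 assms(1,2)] .
  then have "\<forall>\<^sub>F x in at_bot. a2 * f2 (- x - b2) < a1 * f2 (- x - b1)"
    by (simp add: at_bot_mirror eventually_filtermap)
  then have "\<forall>\<^sub>F x in at_bot. x \<in> {..< - b2} \<and> fabc f1 f2 a1 b1 c x - fabc f1 f2 a2 b2 c x < 0"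
    using eventually_gt_at_bot[of "- b2"]
    by eventually_elim (use \<open>b1 < b2\<close> in \<open>auto simp: fabc_def\<close>)
  moreover have
    "\<forall>\<^sub>F x in at_left (- b2). x \<in> {..< - b2} \<and> 0 < fabc f1 f2 a1 b1 c x - fabc f1 f2 a2 b2 c x"
    using eventually_at_left_less[of "- b2"]
      eventually_fabc_below_at_left_pole[OF assms(1,3), where a' = a1 and c' = c and c = c]
    by eventually_elim auto
  ultimately have "\<exists>x\<in>{..< - b2}. fabc f1 f2 a1 b1 c x - fabc f1 f2 a2 b2 c x = 0"
    by (intro connected_IVT_eventually continuous_on_diff continuous_on_fabc)
      (use \<open>b1 < b2\<close> in auto)
  then show ?thesis using \<open>b1 < b2\<close> by force
qed

lemma fabc_crosses_twice:
  assumes "0 < a1" "0 < a2" "b2 < b1" "c2 < c1"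
  shows "\<exists>x y. x < - b1 \<and> - b2 < y \<and>
    fabc f1 f2 a1 b1 c1 x = fabc f1 f2 a2 b2 c2 x \<and> fabc f1 f2 a1 b1 c1 y = fabc f1 f2 a2 b2 c2 y"
proof -
  let ?d = "\<lambda>x. fabc f1 f2 a1 b1 c1 x - fabc f1 f2 a2 b2 c2 x"
  have "\<forall>\<^sub>F x in at_left (- b1). x \<in> {..< - b1} \<and> ?d x < 0"
    using eventually_at_left_less[of "- b1"]
      fabc_order_near_poles(1)[OF assms(1-3), where c = c1 and c' = c2]
    by eventually_elim auto
  moreover have "(?d \<longlongrightarrow> c1 - c2) at_bot"
    by (intro tendsto_diff fabc_tendsto_at_bot)
  then have "\<forall>\<^sub>F x in at_bot. 0 < ?d x"
    by (rule order_tendstoD(1)) (use assms(4) in simp)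
  with eventually_gt_at_bot[of "- b1"] have "\<forall>\<^sub>F x in at_bot. x \<in> {..< - b1} \<and> 0 < ?d x"
    by eventually_elim simp
  ultimately have "\<exists>x\<in>{..< - b1}. ?d x = 0"
    by (intro connected_IVT_eventually continuous_on_diff continuous_on_fabc) (use assms(3) in auto)
  then obtain x where "x < - b1" "?d x = 0" by auto
  have "\<forall>\<^sub>F y in at_right (- b2). y \<in> {- b2<..} \<and> ?d y < 0"
    using eventually_at_right_less[of "- b2"]
      fabc_order_near_poles(4)[OF assms(1-3), where c = c1 and c' = c2]
    by eventually_elim auto
  moreover have "(?d \<longlongrightarrow> c1 - c2) at_top"
    by (intro tendsto_diff fabc_tendsto_at_top)
  then have "\<forall>\<^sub>F y in at_top. 0 < ?d y"
    by (rule order_tendstoD(1)) (use assms(4) in simp)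
  with eventually_gt_at_top[of "- b2"] have "\<forall>\<^sub>F y in at_top. y \<in> {- b2<..} \<and> 0 < ?d y"
    by eventually_elim simp
  ultimately have "\<exists>y\<in>{- b2<..}. ?d y = 0"
    by (intro connected_IVT_eventually continuous_on_diff continuous_on_fabc) (use assms(3) in auto)
  then obtain y where "- b2 < y" "?d y = 0" by auto
  with \<open>x < - b1\<close> \<open>?d x = 0\<close> show ?thesis by auto
qed

lemma fabc_asymptote_order_at_sole_crossing:
  assumes "0 < a1" "0 < a2" "b2 < b1" "c1 \<noteq> c2"
    and "{x. x \<noteq> - b1 \<and> x \<noteq> - b2 \<and> fabc f1 f2 a1 b1 c1 x = fabc f1 f2 a2 b2 c2 x} = {xp}"
  shows "c1 < c2"
proof (rule ccontr)
  assume "\<not> c1 < c2"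
  with assms(4) have "c2 < c1" by simp
  then obtain x y where "x < - b1" "- b2 < y"
    "fabc f1 f2 a1 b1 c1 x = fabc f1 f2 a2 b2 c2 x" "fabc f1 f2 a1 b1 c1 y = fabc f1 f2 a2 b2 c2 y"
    using fabc_crosses_twice assms(1-3) by blast
  moreover from this have "x \<in> {xp}" "y \<in> {xp}"
    unfolding assms(5)[symmetric] using assms(3) by auto
  ultimately show False using assms(3) by simp
qed

lemma deriv_fabc_eq_at_sole_crossing:
  assumes "0 < a1" "0 < a2" "b2 < b1" "c1 < c2"
    and sole: "{x. x \<noteq> - b1 \<and> x \<noteq> - b2 \<and> fabc f1 f2 a1 b1 c1 x = fabc f1 f2 a2 b2 c2 x} = {xp}"
  shows "deriv (fabc f1 f2 a1 b1 c1) xp = deriv (fabc f1 f2 a2 b2 c2) xp"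
proof -
  define d where "d x = fabc f1 f2 a1 b1 c1 x - fabc f1 f2 a2 b2 c2 x" for x
  have xp: "xp \<noteq> - b1" "xp \<noteq> - b2" using sole by auto
  have deriv:
    "(d has_real_derivative deriv (fabc f1 f2 a1 b1 c1) xp - deriv (fabc f1 f2 a2 b2 c2) xp) (at xp)"
    unfolding d_def[abs_def] using xp
    by (intro DERIV_diff DERIV_deriv_iff_real_differentiable[THEN iffD2] fabc_differentiable)
  have cont: "continuous_on S d" and sole_in: "{y \<in> S. d y = 0} = {xp}"
    if "xp \<in> S" "- b1 \<notin> S" "- b2 \<notin> S" for S
    using that sole unfolding d_def[abs_def] by (auto intro!: continuous_on_diff continuous_on_fabc)
  have "(d \<longlongrightarrow> c1 - c2) at_bot" "(d \<longlongrightarrow> c1 - c2) at_top"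
    unfolding d_def[abs_def] by (intro tendsto_diff fabc_tendsto_at_bot fabc_tendsto_at_top)+
  then have bot: "\<forall>\<^sub>F y in at_bot. d y < 0" and top: "\<forall>\<^sub>F y in at_top. d y < 0"
    using assms(4) by (auto intro: order_tendstoD(2))
  have left_b1: "\<forall>\<^sub>F y in at_left (- b1). d y < 0"
    and right_b1: "\<forall>\<^sub>F y in at_right (- b1). 0 < d y"
    and left_b2: "\<forall>\<^sub>F y in at_left (- b2). 0 < d y"
    and right_b2: "\<forall>\<^sub>F y in at_right (- b2). d y < 0"
    using fabc_order_near_poles[OF assms(1-3), where c = c1 and c' = c2] by (simp_all add: d_def)
  consider "xp < - b1" | "- b1 < xp" "xp < - b2" | "- b2 < xp" using xp by linarith
  then have "deriv (fabc f1 f2 a1 b1 c1) xp - deriv (fabc f1 f2 a2 b2 c2) xp = 0"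
  proof cases
    case 1
    have "\<forall>\<^sub>F y in at_bot. y \<in> {..< - b1} \<and> y < xp \<and> d y < 0"
      using eventually_gt_at_bot[of xp] bot by eventually_elim (use 1 in auto)
    moreover have "\<forall>\<^sub>F y in at_left (- b1). y \<in> {..< - b1} \<and> xp < y \<and> d y < 0"
      using eventually_at_left_real[OF 1] left_b1 by eventually_elim auto
    ultimately show ?thesis
      using DERIV_zero_at_sole_root_without_sign_change[OF connected_Iio cont sole_in deriv
          trivial_limit_at_bot_linorder trivial_limit_at_left_real] 1 assms(3) by simp
  next
    case 2
    have "\<forall>\<^sub>F y in at_right (- b1). y \<in> {- b1<..<- b2} \<and> y < xp \<and> - d y < 0"
      using eventually_at_right_real[OF 2(1)] right_b1 by eventually_elim (use 2 in auto)
    moreover have "\<forall>\<^sub>F y in at_left (- b2). y \<in> {- b1<..<- b2} \<and> xp < y \<and> - d y < 0"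
      using eventually_at_left_real[OF 2(2)] left_b2 by eventually_elim (use 2 in auto)
    moreover have "{y \<in> {- b1<..<- b2}. - d y = 0} = {xp}"
      using sole_in[of "{- b1<..<- b2}"] 2 by auto
    ultimately show ?thesis
      using DERIV_zero_at_sole_root_without_sign_change[OF connected_Ioo
          continuous_on_minus[OF cont] _ DERIV_minus[OF deriv]
          trivial_limit_at_right_real trivial_limit_at_left_real] 2
      by simp
  next
    case 3
    have "\<forall>\<^sub>F y in at_right (- b2). y \<in> {- b2<..} \<and> y < xp \<and> d y < 0"
      using eventually_at_right_real[OF 3] right_b2 by eventually_elim auto
    moreover have "\<forall>\<^sub>F y in at_top. y \<in> {- b2<..} \<and> xp < y \<and> d y < 0"
      using eventually_gt_at_top[of xp] top by eventually_elim (use 3 in auto)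
    ultimately show ?thesis
      using DERIV_zero_at_sole_root_without_sign_change[OF connected_Ioi cont sole_in deriv
          trivial_limit_at_right_real trivial_limit_at_top_linorder] 3 assms(3) by simp
  qed
  then show ?thesis by simp
qed

lemma fabc_bar_meet_at_vertical_asymptote:
  assumes "fabc_bar f1 f2 a1 b1 c1 \<inter> fabc_bar f1 f2 a2 b2 c2 = {(Fin b, Infty)}"
  shows "a1 = a2 \<and> b1 = - b \<and> b2 = - b \<and> c1 \<noteq> c2"
proof -
  have common:
    "q \<in> fabc_bar f1 f2 a1 b1 c1 \<and> q \<in> fabc_bar f1 f2 a2 b2 c2 \<longleftrightarrow> q = (Fin b, Infty)" for q
    using assms by blast
  have "b1 = - b" "b2 = - b"
    using common[of "(Fin b, Infty)"] by (simp_all add: Fin_Infty_mem_fabc_bar)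
  moreover have "c1 \<noteq> c2" using common[of "(Infty, Fin c1)"] by (auto simp: Infty_Fin_mem_fabc_bar)
  moreover have "a1 = a2"
  proof (rule ccontr)
    assume "a1 \<noteq> a2"
    then obtain x where "x \<noteq> - b1" "fabc f1 f2 a1 b1 c1 x = fabc f1 f2 a2 b1 c2 x"
      using fabc_same_pole_crossing[OF _ \<open>c1 \<noteq> c2\<close>] by blast
    then show False
      using common[of "(Fin x, Fin (fabc f1 f2 a1 b1 c1 x))"] \<open>b1 = - b\<close> \<open>b2 = - b\<close>
      by (simp add: Fin_Fin_mem_fabc_bar)
  qed
  ultimately show ?thesis by simp
qed

lemma fabc_bar_meet_at_horizontal_asymptote:
  assumes "0 < a1" "0 < a2"
    and "fabc_bar f1 f2 a1 b1 c1 \<inter> fabc_bar f1 f2 a2 b2 c2 = {(Infty, Fin c)}"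
  shows "a1 = a2 \<and> b1 \<noteq> b2 \<and> c1 = c \<and> c2 = c"
proof -
  have common:
    "q \<in> fabc_bar f1 f2 a1 b1 c1 \<and> q \<in> fabc_bar f1 f2 a2 b2 c2 \<longleftrightarrow> q = (Infty, Fin c)" for q
    using assms(3) by blast
  have "c1 = c" "c2 = c" using common[of "(Infty, Fin c)"] by (simp_all add: Infty_Fin_mem_fabc_bar)
  moreover have "b1 \<noteq> b2"
    using common[of "(Fin (- b1), Infty)"] by (auto simp: Fin_Infty_mem_fabc_bar)
  moreover have "a1 = a2"
  proof (rule ccontr)
    assume "a1 \<noteq> a2"
    then consider "a2 < a1" | "a1 < a2" by linarith
    then obtain x where "x \<noteq> - b1" "x \<noteq> - b2" "fabc f1 f2 a1 b1 c x = fabc f1 f2 a2 b2 c x"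
    proof cases
      case 1
      then show ?thesis using fabc_same_asymptote_crossing[OF assms(2) 1 \<open>b1 \<noteq> b2\<close>] that by blast
    next
      case 2
      from fabc_same_asymptote_crossing[OF assms(1) 2, of b2 b1 c] \<open>b1 \<noteq> b2\<close>
      obtain x where "x \<noteq> - b2" "x \<noteq> - b1" "fabc f1 f2 a2 b2 c x = fabc f1 f2 a1 b1 c x" by auto
      then show ?thesis by (intro that) auto
    qed
    then show False
      using common[of "(Fin x, Fin (fabc f1 f2 a1 b1 c1 x))"] \<open>c1 = c\<close> \<open>c2 = c\<close>
      by (simp add: Fin_Fin_mem_fabc_bar)
  qed
  ultimately show ?thesis by simp
qed

lemma fabc_bar_meet_at_finite_point:
  assumes "0 < a1" "0 < a2"
    and "fabc_bar f1 f2 a1 b1 c1 \<inter> fabc_bar f1 f2 a2 b2 c2 = {(Fin xp, Fin yp)}"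
  shows "deriv (fabc f1 f2 a1 b1 c1) xp = deriv (fabc f1 f2 a2 b2 c2) xp"
proof -
  have common:
    "q \<in> fabc_bar f1 f2 a1 b1 c1 \<and> q \<in> fabc_bar f1 f2 a2 b2 c2 \<longleftrightarrow> q = (Fin xp, Fin yp)" for q
    using assms(3) by blast
  have "b1 \<noteq> b2" using common[of "(Fin (- b1), Infty)"] by (auto simp: Fin_Infty_mem_fabc_bar)
  have "c1 \<noteq> c2" using common[of "(Infty, Fin c1)"] by (auto simp: Infty_Fin_mem_fabc_bar)
  have sole: "{x. x \<noteq> - b1 \<and> x \<noteq> - b2 \<and> fabc f1 f2 a1 b1 c1 x = fabc f1 f2 a2 b2 c2 x} = {xp}"
  proof (intro set_eqI iffI)
    fix x
    assume "x \<in> {x. x \<noteq> - b1 \<and> x \<noteq> - b2 \<and> fabc f1 f2 a1 b1 c1 x = fabc f1 f2 a2 b2 c2 x}"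
    then show "x \<in> {xp}"
      using common[of "(Fin x, Fin (fabc f1 f2 a1 b1 c1 x))"] by (simp add: Fin_Fin_mem_fabc_bar)
  next
    fix x
    assume "x \<in> {xp}"
    then show "x \<in> {x. x \<noteq> - b1 \<and> x \<noteq> - b2 \<and> fabc f1 f2 a1 b1 c1 x = fabc f1 f2 a2 b2 c2 x}"
      using common[of "(Fin xp, Fin yp)"] by (simp add: Fin_Fin_mem_fabc_bar)
  qed
  show ?thesis
  proof (cases "b2 < b1")
    case True
    have "c1 < c2"
      by (rule fabc_asymptote_order_at_sole_crossing[OF assms(1,2) True \<open>c1 \<noteq> c2\<close> sole])
    then show ?thesis by (rule deriv_fabc_eq_at_sole_crossing[OF assms(1,2) True _ sole])
  next
    case False
    with \<open>b1 \<noteq> b2\<close> have "b1 < b2" by simp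
    have "{x. x \<noteq> - b2 \<and> x \<noteq> - b1 \<and> fabc f1 f2 a2 b2 c2 x = fabc f1 f2 a1 b1 c1 x} =
      {x. x \<noteq> - b1 \<and> x \<noteq> - b2 \<and> fabc f1 f2 a1 b1 c1 x = fabc f1 f2 a2 b2 c2 x}"
      by (rule Collect_cong) auto
    with sole have sole':
      "{x. x \<noteq> - b2 \<and> x \<noteq> - b1 \<and> fabc f1 f2 a2 b2 c2 x = fabc f1 f2 a1 b1 c1 x} = {xp}"
      by simp
    have "c2 < c1"
      by (rule fabc_asymptote_order_at_sole_crossing[OF assms(2,1) \<open>b1 < b2\<close>
          \<open>c1 \<noteq> c2\<close>[symmetric] sole'])
    then show ?thesis
      by (rule deriv_fabc_eq_at_sole_crossing[OF assms(2,1) \<open>b1 < b2\<close> _ sole', symmetric])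
  qed
qed

end

theorem lemma4p15:
  fixes f1 f2 :: "real \<Rightarrow> real" and a1 a2 b1 b2 c1 c2 :: real and p :: "circ \<times> circ"
  assumes "strongly_hyperbolic f1" and "strongly_hyperbolic f2"
    and "a1 > 0" and "a2 > 0"
    and "fabc_bar f1 f2 a1 b1 c1 \<noteq> fabc_bar f1 f2 a2 b2 c2"
    and "fabc_bar f1 f2 a1 b1 c1 \<inter> fabc_bar f1 f2 a2 b2 c2 = {p}"
  shows "(\<forall>b. p = (Fin b, Infty) \<longrightarrow> a1 = a2 \<and> b1 = -b \<and> b2 = -b \<and> c1 \<noteq> c2)
       \<and> (\<forall>c. p = (Infty, Fin c) \<longrightarrow> a1 = a2 \<and> b1 \<noteq> b2 \<and> c1 = c \<and> c2 = c)
       \<and> (\<forall>xp yp. p = (Fin xp, Fin yp) \<longrightarrow>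
            deriv (fabc f1 f2 a1 b1 c1) xp = deriv (fabc f1 f2 a2 b2 c2) xp)"
proof -
  \<comment> \<open>The hypothesis that the closures differ follows from the singleton intersection.\<close>
  have "a1 = a2 \<and> b1 = -b \<and> b2 = -b \<and> c1 \<noteq> c2" if "p = (Fin b, Infty)" for b
    using fabc_bar_meet_at_vertical_asymptote[OF assms(1,2) assms(6)[unfolded that]] .
  moreover have "a1 = a2 \<and> b1 \<noteq> b2 \<and> c1 = c \<and> c2 = c" if "p = (Infty, Fin c)" for c
    using fabc_bar_meet_at_horizontal_asymptote[OF assms(1-4) assms(6)[unfolded that]] .
  moreover have "deriv (fabc f1 f2 a1 b1 c1) xp = deriv (fabc f1 f2 a2 b2 c2) xp"
    if "p = (Fin xp, Fin yp)" for xp yp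
    using fabc_bar_meet_at_finite_point[OF assms(1-4) assms(6)[unfolded that]] .
  ultimately show ?thesis by blast
qed

end
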